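(* Let $X$ be a Banach space and $T\in\mathcal B(X)$ be approximable in the $\mathcal B(X)$ norm by finite-rank operators. Then either $f=Tf$ has a nonzero solution $f\in X$, or $(I-T)^{-1}\in\mathcal B(X)$. In the latter case: (i) if $T$ has finite rank and belongs to a (not necessarily closed) Banach operator subalgebra $\widehat X\subset\mathcal B(X)$, then $(I-T)^{-1}-I\in\widehat X$; (ii) if $\widehat X\subset\mathcal B(X)$ is a subalgebra such that $T_1TT_2\in\widehat X$ with $\|T_1TT_2\|_{\widehat X}\lesssim\|T_1\|_{\widehat X}\|T\|_{\mathcal B(X)}\|T_2\|_{\widehat X}$ for all $T_1,T_2\in\widehat X$, $T\in\mathcal B(X)$, and $T\in\widehat X$ is approximable by finite-rank operators in the $\widehat X$ norm, then $(I-T)^{-1}-I\in\widehat X$. *)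

theory Defs
  imports "HOL-Analysis.Analysis"
begin

(* Bounded linear operators on a (real) Banach space X are the type
  'a =>L 'a with the operator norm. *)

definition finite_rank :: "('a::real_normed_vector \<Rightarrow>\<^sub>L 'a) \<Rightarrow> bool" where
  "finite_rank T \<longleftrightarrow> (\<exists>B. finite B \<and> range (blinfun_apply T) \<subseteq> span B)"

definition approx_finite_rank :: "('a::real_normed_vector \<Rightarrow>\<^sub>L 'a) \<Rightarrow> bool" where
  "approx_finite_rank T \<longleftrightarrow> T \<in> closure {S. finite_rank S}"

(* A (not necessarily closed) Banach operator subalgebra: a subset A of B(X),
  closed under the algebra operations, carrying its own norm N in which it is a
  Banach algebra (complete, submultiplicative), continuously embedded in B(X).*)
definition banach_op_subalgebra ::
  "('a::real_normed_vector \<Rightarrow>\<^sub>L 'a) set \<Rightarrow> (('a \<Rightarrow>\<^sub>L 'a) \<Rightarrow> real) \<Rightarrow> bool" where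
  "banach_op_subalgebra A N \<longleftrightarrow>
     0 \<in> A \<and>
     (\<forall>S\<in>A. \<forall>T\<in>A. S + T \<in> A) \<and>
     (\<forall>c. \<forall>S\<in>A. c *\<^sub>R S \<in> A) \<and>
     (\<forall>S\<in>A. \<forall>T\<in>A. S o\<^sub>L T \<in> A) \<and>
     (\<forall>S\<in>A. 0 \<le> N S \<and> (N S = 0 \<longleftrightarrow> S = 0)) \<and>
     (\<forall>S\<in>A. \<forall>T\<in>A. N (S + T) \<le> N S + N T) \<and>
     (\<forall>c. \<forall>S\<in>A. N (c *\<^sub>R S) = \<bar>c\<bar> * N S) \<and>
     (\<forall>S\<in>A. \<forall>T\<in>A. N (S o\<^sub>L T) \<le> N S * N T) \<and>
     (\<forall>f :: nat \<Rightarrow> ('a \<Rightarrow>\<^sub>L 'a). (\<forall>n. f n \<in> A) \<and>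
         (\<forall>e>0. \<exists>M. \<forall>m\<ge>M. \<forall>n\<ge>M. N (f m - f n) < e)
        \<longrightarrow> (\<exists>L\<in>A. (\<lambda>n. N (f n - L)) \<longlonglongrightarrow> 0)) \<and>
     (\<exists>C. \<forall>S\<in>A. norm S \<le> C * N S)"

end

theory Submission
  imports Defs "HOL-Analysis.Finite_Function_Topology"
begin

text \<open>
  Suppose \<open>I - T\<close> is injective and choose a finite-rank \<open>F\<close> with \<open>T - F\<close> of norm below 1
  (in the norm of the subalgebra for (ii); \<open>F = T\<close> for (i)). The Neumann series inverts
  \<open>I - (T - F)\<close> as \<open>I + L\<close> with \<open>L\<close> in the subalgebra, and
  \<open>I - T = (I - (T - F)) (I - G)\<close> with \<open>G = (I + L) F\<close> of finite rank.
  For finite-rank \<open>G\<close> the span of the powers \<open>G, G\<^sup>2, \<dots>\<close> is finite-dimensional, and on it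
  \<open>R \<mapsto> R - G R\<close> is injective, hence surjective: solving \<open>R - G R = G\<close> gives
  \<open>(I - G)\<^sup>-\<^sup>1 = I + R\<close> with \<open>R\<close> a combination of powers of \<open>G\<close>, which therefore lies in
  every subalgebra containing \<open>G\<close>. Hence \<open>(I - T)\<^sup>-\<^sup>1 - I = L + R + R L\<close> lies in the subalgebra.
\<close>

lemma linear_inj_on_imp_surj_on_finite_span:
  fixes f :: "'b::real_vector \<Rightarrow> 'b"
  assumes "linear f" and "subspace U" and "U \<subseteq> span G" and "finite G"
    and "f ` U \<subseteq> U" and "inj_on f U"
  shows "U \<subseteq> f ` U"
proof
  obtain B where B: "B \<subseteq> U" "independent B" "U \<subseteq> span B"
    by (rule basis_exists)
  have "B \<subseteq> span G"
    using B(1) \<open>U \<subseteq> span G\<close> by (rule order_trans)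
  then have "finite B"
    by (rule conjunct1[OF independent_span_bound[OF \<open>finite G\<close> B(2)]])
  have span_B: "span B \<subseteq> U"
    using span_minimal[OF B(1) \<open>subspace U\<close>] .
  have indep_fB: "independent (f ` B)"
    using linear_independent_injective_image[OF \<open>linear f\<close> B(2)]
      inj_on_subset[OF \<open>inj_on f U\<close> span_B] .
  have card_fB: "card (f ` B) = card B"
    using card_image[OF inj_on_subset[OF \<open>inj_on f U\<close> B(1)]] .
  have "f ` B \<subseteq> span B"
    using image_mono[OF B(1)] \<open>f ` U \<subseteq> U\<close> B(3) by (rule order_trans[OF order_trans])
  fix v assume "v \<in> U"
  have "v \<in> span (f ` B)"
  proof (rule ccontr)
    assume v_notin: "v \<notin> span (f ` B)"
    then have "v \<notin> f ` B"
      using span_base by metis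
    have "insert v (f ` B) \<subseteq> span B"
      using \<open>v \<in> U\<close> B(3) \<open>f ` B \<subseteq> span B\<close> by (intro insert_subsetI) auto
    then have "card (insert v (f ` B)) \<le> card B"
      by (rule conjunct2[OF independent_span_bound[OF \<open>finite B\<close> independent_insertI[OF v_notin indep_fB]]])
    moreover have "card (insert v (f ` B)) = Suc (card (f ` B))"
      using \<open>finite B\<close> \<open>v \<notin> f ` B\<close> by simp
    ultimately show False
      using card_fB by simp
  qed
  then have "v \<in> f ` span B"
    using linear_span_image[OF \<open>linear f\<close>] by metis
  then show "v \<in> f ` U"
    using span_B by blast
qed

lemma finite_span_if_inj_linear_into_finite_span:
  assumes "linear f" and "subspace U" and "inj_on f U"
    and "f ` U \<subseteq> span E" and "finite E"
  obtains B where "finite B" and "U \<subseteq> span B"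
proof -
  obtain B where B: "B \<subseteq> U" "independent B" "U \<subseteq> span B"
    by (rule basis_exists)
  have inj_B: "inj_on f B"
    using inj_on_subset[OF \<open>inj_on f U\<close> B(1)] .
  have "independent (f ` B)"
    using linear_independent_injective_image[OF \<open>linear f\<close> B(2)]
      inj_on_subset[OF \<open>inj_on f U\<close> span_minimal[OF B(1) \<open>subspace U\<close>]] .
  moreover have "f ` B \<subseteq> span E"
    using B(1) \<open>f ` U \<subseteq> span E\<close> by blast
  ultimately have "finite (f ` B)"
    using independent_span_bound[OF \<open>finite E\<close>] by blast
  then show thesis
    using that finite_imageD[OF _ inj_B] B(3) by blast
qed

lemmas blinfun_compose_add_left = bounded_bilinear.add_left[OF bounded_bilinear_blinfun_compose]
lemmas blinfun_compose_add_right = bounded_bilinear.add_right[OF bounded_bilinear_blinfun_compose]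
lemmas blinfun_compose_diff_left = bounded_bilinear.diff_left[OF bounded_bilinear_blinfun_compose]
lemmas blinfun_compose_diff_right = bounded_bilinear.diff_right[OF bounded_bilinear_blinfun_compose]
lemmas blinfun_compose_distrib =
  blinfun_compose_add_left blinfun_compose_add_right
  blinfun_compose_diff_left blinfun_compose_diff_right

lemma blinfun_compose_id_left [simp]: "id_blinfun o\<^sub>L X = X"
  by (rule blinfun_eqI) simp

lemma blinfun_compose_id_right [simp]: "X o\<^sub>L id_blinfun = X"
  by (rule blinfun_eqI) simp

lemma blinfun_compose_assoc: "(X o\<^sub>L Y) o\<^sub>L Z = X o\<^sub>L (Y o\<^sub>L Z)"
  by (rule blinfun_eqI) simp

fun blinfun_power :: "('a::real_normed_vector \<Rightarrow>\<^sub>L 'a) \<Rightarrow> nat \<Rightarrow> 'a \<Rightarrow>\<^sub>L 'a" where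
  "blinfun_power T 0 = id_blinfun"
| "blinfun_power T (Suc k) = T o\<^sub>L blinfun_power T k"

lemma blinfun_power_Suc_right: "blinfun_power T (Suc k) = blinfun_power T k o\<^sub>L T"
proof (induction k)
  case (Suc k)
  then have "blinfun_power T (Suc (Suc k)) = T o\<^sub>L (blinfun_power T k o\<^sub>L T)"
    by simp
  then show ?case
    by (simp add: blinfun_compose_assoc)
qed simp

definition is_blinfun_inverse :: "('a::real_normed_vector \<Rightarrow>\<^sub>L 'a) \<Rightarrow> ('a \<Rightarrow>\<^sub>L 'a) \<Rightarrow> bool" where
  "is_blinfun_inverse S M \<longleftrightarrow> S o\<^sub>L M = id_blinfun \<and> M o\<^sub>L S = id_blinfun"

lemma is_blinfun_inverse_unique:
  assumes "is_blinfun_inverse S M" and "is_blinfun_inverse S' M"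
  shows "S = S'"
  by (metis assms blinfun_compose_assoc blinfun_compose_id_left blinfun_compose_id_right
      is_blinfun_inverse_def)

lemma is_blinfun_inverse_compose:
  assumes "is_blinfun_inverse S\<^sub>1 M\<^sub>1" and "is_blinfun_inverse S\<^sub>2 M\<^sub>2"
  shows "is_blinfun_inverse (S\<^sub>2 o\<^sub>L S\<^sub>1) (M\<^sub>1 o\<^sub>L M\<^sub>2)"
  using assms unfolding is_blinfun_inverse_def
  by (metis blinfun_compose_assoc blinfun_compose_id_left)

lemma is_blinfun_inverse_if_inj_right_inverse:
  assumes "inj (blinfun_apply M)" and "M o\<^sub>L S = id_blinfun"
  shows "is_blinfun_inverse S M"
proof -
  have "S (M x) = x" for x
    using injD[OF assms(1)] assms(2)
    by (metis blinfun_apply_blinfun_compose blinfun_apply_id_blinfun)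
  then have "S o\<^sub>L M = id_blinfun"
    by (auto intro!: blinfun_eqI)
  with assms(2) show ?thesis
    unfolding is_blinfun_inverse_def by blast
qed

lemma inj_id_minus_blinfun_iff:
  "inj (blinfun_apply (id_blinfun - T)) \<longleftrightarrow> (\<forall>f. T f = f \<longrightarrow> f = 0)"
  by (simp add: linear_inj_iff_eq_0 bounded_linear.linear[OF blinfun.bounded_linear_right]
      blinfun.diff_left eq_commute[of "T _"])

lemma finite_rank_compose_left:
  assumes "finite_rank F"
  shows "finite_rank (P o\<^sub>L F)"
proof -
  obtain B where "finite B" and "range (blinfun_apply F) \<subseteq> span B"
    using assms unfolding finite_rank_def by blast
  then have "range (blinfun_apply (P o\<^sub>L F)) \<subseteq> blinfun_apply P ` span B"
    by auto
  also have "\<dots> = span (blinfun_apply P ` B)"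
    using linear_span_image[OF bounded_linear.linear[OF blinfun.bounded_linear_right]] by metis
  finally show ?thesis
    unfolding finite_rank_def using \<open>finite B\<close> by blast
qed

lemma lookup_scaleR_poly_mapping:
  "Poly_Mapping.lookup (c *\<^sub>R p) i = c *\<^sub>R Poly_Mapping.lookup p i"
proof -
  have "finite {i. c *\<^sub>R Poly_Mapping.lookup p i \<noteq> 0}"
    by (rule finite_subset[of _ "Poly_Mapping.keys p"]) (auto simp: in_keys_iff)
  then show ?thesis
    by (simp add: scaleR_poly_mapping_def)
qed

lemma linear_single_poly_mapping: "linear (Poly_Mapping.single b)"
proof (rule linearI)
  show "Poly_Mapping.single b (c *\<^sub>R v) = c *\<^sub>R Poly_Mapping.single b v" for c v
    by (rule poly_mapping_eqI) (simp add: lookup_scaleR_poly_mapping lookup_single when_def)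
qed (rule single_add)

lemma linear_blinfun_compose_left: "linear (\<lambda>R. G o\<^sub>L R)"
  by (rule bounded_linear.linear[OF bounded_bilinear.bounded_linear_right[OF bounded_bilinear_blinfun_compose]])

lemma linear_blinfun_compose_right: "linear (\<lambda>Q. Q o\<^sub>L G)"
  by (rule bounded_linear.linear[OF bounded_bilinear.bounded_linear_left[OF bounded_bilinear_blinfun_compose]])

lemma finite_dim_if_factor_through_finite_rank:
  fixes G :: "'a::real_normed_vector \<Rightarrow>\<^sub>L 'a"
  assumes "finite_rank G" and "subspace U"
    and factor_right: "U \<subseteq> range (\<lambda>Q. Q o\<^sub>L G)"
    and factor_left: "U \<subseteq> range (\<lambda>Q. G o\<^sub>L Q)"
  obtains B where "finite B" and "U \<subseteq> span B"
proof -
  obtain D where D: "D \<subseteq> range (blinfun_apply G)" "independent D" "range (blinfun_apply G) \<subseteq> span D"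
    by (rule basis_exists)
  have "finite D"
    using assms(1) D(1,2) independent_span_bound unfolding finite_rank_def by (meson order_trans)
  have G_in_span: "G y \<in> span D" for y
    using D(3) by blast
  define x where "x b = (SOME y. G y = b)" for b
  have G_x: "G (x b) = b" if "b \<in> D" for b
    unfolding x_def using D(1) that by (auto intro: someI)
  \<comment> \<open>An operator of \<open>U\<close> is determined by its values at chosen preimages of a basis of the range of \<open>G\<close>.\<close>
  define \<Phi> where "\<Phi> R = (\<Sum>b\<in>D. Poly_Mapping.single b (R (x b)))" for R :: "'a \<Rightarrow>\<^sub>L 'a"
  have "linear \<Phi>"
    unfolding \<Phi>_def
    by (rule linearI)
      (simp_all add: blinfun.add_left blinfun.scaleR_left single_add sum.distrib scaleR_sum_right
        linear_scale[OF linear_single_poly_mapping])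
  have lookup_\<Phi>: "Poly_Mapping.lookup (\<Phi> R) b = R (x b)" if "b \<in> D" for R b
    unfolding \<Phi>_def lookup_sum using that \<open>finite D\<close> by (simp add: lookup_single when_def)
  define E where "E = (\<lambda>(b, c). Poly_Mapping.single b c) ` (D \<times> D)"
  have "\<Phi> ` U \<subseteq> span E"
  proof clarify
    fix R assume "R \<in> U"
    then obtain Q where "R = G o\<^sub>L Q"
      using factor_left by blast
    have "Poly_Mapping.single b (R (x b)) \<in> span E" if "b \<in> D" for b
    proof -
      have "Poly_Mapping.single b (R (x b)) \<in> span (Poly_Mapping.single b ` D)"
        using linear_span_image[OF linear_single_poly_mapping] G_in_span \<open>R = G o\<^sub>L Q\<close>
        by (metis blinfun_apply_blinfun_compose image_eqI)
      also have "\<dots> \<subseteq> span E"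
        by (rule span_mono) (auto simp: E_def that)
      finally show ?thesis .
    qed
    then show "\<Phi> R \<in> span E"
      unfolding \<Phi>_def by (auto intro: span_sum)
  qed
  moreover have "inj_on \<Phi> U"
    unfolding linear_inj_on_iff_eq_0[OF \<open>linear \<Phi>\<close> \<open>subspace U\<close>]
  proof (intro ballI impI)
    fix R assume "R \<in> U" and "\<Phi> R = 0"
    then obtain Q where Q: "R = Q o\<^sub>L G"
      using factor_right by blast
    have "Q b = 0" if "b \<in> D" for b
      using lookup_\<Phi>[OF that, of R] \<open>\<Phi> R = 0\<close> Q G_x[OF that] by simp
    then have "Q v = 0" if "v \<in> span D" for v
      using linear_eq_0_on_span[OF bounded_linear.linear[OF blinfun.bounded_linear_right] _ that]
      by blast
    then show "R = 0"
      using Q G_in_span by (auto intro!: blinfun_eqI)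
  qed
  moreover have "finite E"
    unfolding E_def using \<open>finite D\<close> by simp
  ultimately show thesis
    using finite_span_if_inj_linear_into_finite_span[OF \<open>linear \<Phi>\<close> \<open>subspace U\<close>] that
    by blast
qed

lemma finite_rank_inverse:
  fixes G :: "'a::real_normed_vector \<Rightarrow>\<^sub>L 'a"
  assumes "finite_rank G" and "inj (blinfun_apply (id_blinfun - G))"
  obtains R where "R \<in> span (range (\<lambda>k. blinfun_power G (Suc k)))"
    and "is_blinfun_inverse (id_blinfun + R) (id_blinfun - G)"
proof -
  define U where "U = span (range (\<lambda>k. blinfun_power G (Suc k)))"
  have "subspace U"
    unfolding U_def by (rule subspace_span)
  have "U \<subseteq> range (\<lambda>Q. Q o\<^sub>L G)"
    unfolding U_def
    by (rule span_minimal)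
      (auto simp del: blinfun_power.simps simp: blinfun_power_Suc_right
        intro: linear_subspace_image[OF linear_blinfun_compose_right subspace_UNIV])
  moreover have "U \<subseteq> range (\<lambda>Q. G o\<^sub>L Q)"
    unfolding U_def
    by (rule span_minimal) (auto intro: linear_subspace_image[OF linear_blinfun_compose_left subspace_UNIV])
  ultimately obtain B where "finite B" and "U \<subseteq> span B"
    using finite_dim_if_factor_through_finite_rank[OF assms(1) \<open>subspace U\<close>] by blast
  define f where "f R = R - (G o\<^sub>L R)" for R :: "'a \<Rightarrow>\<^sub>L 'a"
  have "linear f"
    unfolding f_def
    by (intro bounded_linear.linear bounded_linear_sub bounded_linear_ident
        bounded_bilinear.bounded_linear_right[OF bounded_bilinear_blinfun_compose])
  have "(\<lambda>R. G o\<^sub>L R) ` U \<subseteq> U"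
    unfolding U_def linear_span_image[OF linear_blinfun_compose_left, symmetric]
  proof (rule span_mono, clarify)
    fix k
    show "G o\<^sub>L blinfun_power G (Suc k) \<in> range (\<lambda>k. blinfun_power G (Suc k))"
      by (rule image_eqI[where x = "Suc k"]) simp_all
  qed
  then have "f ` U \<subseteq> U"
    by (auto simp: f_def intro!: subspace_diff[OF \<open>subspace U\<close>])
  moreover have "inj_on f U"
    unfolding linear_inj_on_iff_eq_0[OF \<open>linear f\<close> \<open>subspace U\<close>]
  proof (intro ballI impI)
    fix R assume "f R = 0"
    then have "G (R y) = R y" for y
      unfolding f_def by (metis blinfun_apply_blinfun_compose eq_iff_diff_eq_0)
    then show "R = 0"
      using assms(2) unfolding inj_id_minus_blinfun_iff by (auto intro!: blinfun_eqI)
  qed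
  moreover have "G \<in> U"
    unfolding U_def by (rule span_base) (rule image_eqI[where x = 0], simp_all)
  ultimately obtain R where "R \<in> U" and "f R = G"
    using linear_inj_on_imp_surj_on_finite_span[OF \<open>linear f\<close> \<open>subspace U\<close> \<open>U \<subseteq> span B\<close> \<open>finite B\<close>]
    by blast
  then have "(id_blinfun - G) o\<^sub>L (id_blinfun + R) = id_blinfun"
    unfolding f_def by (simp add: blinfun_compose_distrib algebra_simps)
  with assms(2) \<open>R \<in> U\<close> show thesis
    using that is_blinfun_inverse_if_inj_right_inverse unfolding U_def by blast
qed

lemma inverse_of_finite_rank_perturbation:
  fixes T F P :: "'a::real_normed_vector \<Rightarrow>\<^sub>L 'a"
  assumes "inj (blinfun_apply (id_blinfun - T))" and "finite_rank F"
    and P: "is_blinfun_inverse P (id_blinfun - (T - F))"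
  obtains R where "R \<in> span (range (\<lambda>k. blinfun_power (P o\<^sub>L F) (Suc k)))"
    and "is_blinfun_inverse ((id_blinfun + R) o\<^sub>L P) (id_blinfun - T)"
proof -
  have "(id_blinfun - (T - F)) o\<^sub>L (id_blinfun - (P o\<^sub>L F))
      = ((id_blinfun - (T - F)) o\<^sub>L id_blinfun) - ((id_blinfun - (T - F)) o\<^sub>L (P o\<^sub>L F))"
    by (rule blinfun_compose_diff_right)
  also have "\<dots> = id_blinfun - T"
    using P unfolding is_blinfun_inverse_def
    by (simp add: blinfun_compose_assoc[symmetric])
  finally have factor: "id_blinfun - T = (id_blinfun - (T - F)) o\<^sub>L (id_blinfun - (P o\<^sub>L F))"
    by simp
  then have "inj (blinfun_apply (id_blinfun - (P o\<^sub>L F)))"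
    using assms(1) by (metis blinfun_compose.rep_eq inj_on_imageI2)
  then obtain R where "R \<in> span (range (\<lambda>k. blinfun_power (P o\<^sub>L F) (Suc k)))"
    and "is_blinfun_inverse (id_blinfun + R) (id_blinfun - (P o\<^sub>L F))"
    using finite_rank_inverse[OF finite_rank_compose_left[OF assms(2)]] by blast
  with P show thesis
    using that is_blinfun_inverse_compose factor by metis
qed

lemma blinfun_geometric_sum_left:
  "(id_blinfun - E) o\<^sub>L (\<Sum>k<n. blinfun_power E k) = id_blinfun - blinfun_power E n"
proof (induction n)
  case (Suc n)
  have "(id_blinfun - E) o\<^sub>L (\<Sum>k<Suc n. blinfun_power E k)
      = ((id_blinfun - E) o\<^sub>L (\<Sum>k<n. blinfun_power E k)) + ((id_blinfun - E) o\<^sub>L blinfun_power E n)"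
    by (simp add: blinfun_compose_add_right)
  also have "\<dots> = id_blinfun - blinfun_power E (Suc n)"
    unfolding Suc.IH by (simp add: blinfun_compose_diff_left)
  finally show ?case .
qed simp

lemma blinfun_geometric_sum_right:
  "(\<Sum>k<n. blinfun_power E k) o\<^sub>L (id_blinfun - E) = id_blinfun - blinfun_power E n"
proof (induction n)
  case (Suc n)
  have "(\<Sum>k<Suc n. blinfun_power E k) o\<^sub>L (id_blinfun - E)
      = ((\<Sum>k<n. blinfun_power E k) o\<^sub>L (id_blinfun - E)) + (blinfun_power E n o\<^sub>L (id_blinfun - E))"
    by (simp add: blinfun_compose_add_left)
  also have "\<dots> = id_blinfun - blinfun_power E (Suc n)"
    unfolding Suc.IH
    by (simp add: blinfun_compose_diff_right blinfun_power_Suc_right del: blinfun_power.simps(2))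
  finally show ?case .
qed simp

context
  fixes A :: "('a::real_normed_vector \<Rightarrow>\<^sub>L 'a) set" and N :: "('a \<Rightarrow>\<^sub>L 'a) \<Rightarrow> real"
  assumes subalgebra: "banach_op_subalgebra A N"
begin

lemma banach_op_subalgebra_subspace: "subspace A"
  using subalgebra unfolding banach_op_subalgebra_def subspace_def by simp

lemma banach_op_subalgebra_compose: "S \<in> A \<Longrightarrow> T \<in> A \<Longrightarrow> S o\<^sub>L T \<in> A"
  using subalgebra unfolding banach_op_subalgebra_def by simp

lemma banach_op_subalgebra_norm_nonneg: "S \<in> A \<Longrightarrow> 0 \<le> N S"
  using subalgebra unfolding banach_op_subalgebra_def by simp

lemma banach_op_subalgebra_norm_zero: "N 0 = 0"
  using subalgebra unfolding banach_op_subalgebra_def by simp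

lemma banach_op_subalgebra_norm_triangle: "S \<in> A \<Longrightarrow> T \<in> A \<Longrightarrow> N (S + T) \<le> N S + N T"
  using subalgebra unfolding banach_op_subalgebra_def by simp

lemma banach_op_subalgebra_norm_compose: "S \<in> A \<Longrightarrow> T \<in> A \<Longrightarrow> N (S o\<^sub>L T) \<le> N S * N T"
  using subalgebra unfolding banach_op_subalgebra_def by simp

lemma banach_op_subalgebra_norm_scaleR: "S \<in> A \<Longrightarrow> N (c *\<^sub>R S) = \<bar>c\<bar> * N S"
  using subalgebra unfolding banach_op_subalgebra_def by simp

lemma banach_op_subalgebra_complete:
  assumes "\<And>n. f n \<in> A" and "\<And>e. e > 0 \<Longrightarrow> \<exists>M. \<forall>m\<ge>M. \<forall>n\<ge>M. N (f m - f n) < e"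
  obtains L where "L \<in> A" and "(\<lambda>n. N (f n - L)) \<longlonglongrightarrow> 0"
  using subalgebra assms unfolding banach_op_subalgebra_def by (elim conjE) metis

lemma banach_op_subalgebra_bounded: "\<exists>C. \<forall>S\<in>A. norm S \<le> C * N S"
  using subalgebra unfolding banach_op_subalgebra_def by (elim conjE) assumption
lemma banach_op_subalgebra_norm_minus_commute:
  assumes "S \<in> A" and "T \<in> A"
  shows "N (S - T) = N (T - S)"
proof -
  have "T - S \<in> A"
    using subspace_diff[OF banach_op_subalgebra_subspace assms(2,1)] .
  then show ?thesis
    using banach_op_subalgebra_norm_scaleR[of "T - S" "-1"] by simp
qed

lemma banach_op_subalgebra_norm_sum:
  assumes "finite K" and "\<And>k. k \<in> K \<Longrightarrow> f k \<in> A"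
  shows "N (\<Sum>k\<in>K. f k) \<le> (\<Sum>k\<in>K. N (f k))"
  using assms
proof (induction K rule: finite_induct)
  case (insert k K)
  have "(\<Sum>k\<in>K. f k) \<in> A"
    using insert.prems by (intro subspace_sum[OF banach_op_subalgebra_subspace]) auto
  then have "N (f k + (\<Sum>k\<in>K. f k)) \<le> N (f k) + N (\<Sum>k\<in>K. f k)"
    using insert.prems by (intro banach_op_subalgebra_norm_triangle) auto
  with insert show ?case
    by simp
qed (simp add: banach_op_subalgebra_norm_zero)

lemma banach_op_subalgebra_tendsto:
  assumes "\<And>n. f n \<in> A" and "L \<in> A" and "(\<lambda>n. N (f n - L)) \<longlonglongrightarrow> 0"
  shows "f \<longlonglongrightarrow> L"
proof -
  obtain C where C: "\<And>S. S \<in> A \<Longrightarrow> norm S \<le> C * N S"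
    using banach_op_subalgebra_bounded by blast
  have bound: "\<forall>n. norm (f n - L) \<le> \<bar>C\<bar> * N (f n - L)"
  proof
    fix n
    have "f n - L \<in> A"
      using subspace_diff[OF banach_op_subalgebra_subspace assms(1,2)] .
    then have "norm (f n - L) \<le> C * N (f n - L)"
      by (rule C)
    also have "\<dots> \<le> \<bar>C\<bar> * N (f n - L)"
      by (rule mult_right_mono[OF abs_ge_self banach_op_subalgebra_norm_nonneg]) fact
    finally show "norm (f n - L) \<le> \<bar>C\<bar> * N (f n - L)" .
  qed
  have "(\<lambda>n. \<bar>C\<bar> * N (f n - L)) \<longlonglongrightarrow> 0"
    using tendsto_mult_right_zero[OF assms(3)] .
  then have "(\<lambda>n. f n - L) \<longlonglongrightarrow> 0"
    by (rule Lim_null_comparison[OF always_eventually[OF bound]])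
  then show ?thesis
    by (rule LIM_zero_cancel)
qed

lemma banach_op_subalgebra_summable:
  assumes "\<And>k. f k \<in> A" and "summable (\<lambda>k. N (f k))"
  obtains L where "L \<in> A" and "(\<lambda>n. \<Sum>k<n. f k) \<longlonglongrightarrow> L"
proof -
  define s where "s = (\<lambda>n. \<Sum>k<n. f k)"
  have s_in: "s n \<in> A" for n
    unfolding s_def using assms(1) by (intro subspace_sum[OF banach_op_subalgebra_subspace]) auto
  have cauchy: "\<exists>M. \<forall>m\<ge>M. \<forall>n\<ge>M. N (s m - s n) < e" if "e > 0" for e
  proof -
    obtain M where M: "\<And>m n. M \<le> m \<Longrightarrow> norm (\<Sum>k=m..<n. N (f k)) < e"
      using assms(2) \<open>e > 0\<close> unfolding summable_Cauchy by blast
    have tail: "N (s n - s m) < e" if "M \<le> m" and "m \<le> n" for m n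
    proof -
      have "s n - s m = (\<Sum>k=m..<n. f k)"
        unfolding s_def using \<open>m \<le> n\<close> by (simp add: lessThan_atLeast0 sum_diff_nat_ivl)
      then have "N (s n - s m) \<le> (\<Sum>k=m..<n. N (f k))"
        using banach_op_subalgebra_norm_sum[of "{m..<n}" f] assms(1) by simp
      also have "\<dots> < e"
        using M[OF \<open>M \<le> m\<close>, of n] by simp
      finally show ?thesis .
    qed
    have "N (s m - s n) < e" if "M \<le> m" and "M \<le> n" for m n
    proof (cases "m \<le> n")
      case True
      then show ?thesis
        using tail[OF \<open>M \<le> m\<close> True] banach_op_subalgebra_norm_minus_commute[OF s_in s_in, of m n]
        by simp
    next
      case False
      then show ?thesis
        using tail[OF \<open>M \<le> n\<close>, of m] by simp
    qed
    then show ?thesis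
      by blast
  qed
  then obtain L where "L \<in> A" and "(\<lambda>n. N (s n - L)) \<longlonglongrightarrow> 0"
    using banach_op_subalgebra_complete[of s, OF s_in cauchy] by blast
  then have "s \<longlonglongrightarrow> L"
    using banach_op_subalgebra_tendsto[of s L] s_in by blast
  with \<open>L \<in> A\<close> show thesis
    unfolding s_def by (rule that)
qed

lemma banach_op_subalgebra_power:
  assumes "T \<in> A"
  shows "blinfun_power T (Suc k) \<in> A" and "N (blinfun_power T (Suc k)) \<le> N T ^ Suc k"
proof (induction k)
  case (Suc k)
  note IH = Suc.IH
  show "blinfun_power T (Suc (Suc k)) \<in> A"
    using banach_op_subalgebra_compose[OF assms IH(1)] by simp
  have "N (blinfun_power T (Suc (Suc k))) \<le> N T * N (blinfun_power T (Suc k))"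
    using banach_op_subalgebra_norm_compose[OF assms IH(1)] by simp
  also have "\<dots> \<le> N T ^ Suc (Suc k)"
    using IH(2) banach_op_subalgebra_norm_nonneg[OF assms] by (simp add: mult_left_mono)
  finally show "N (blinfun_power T (Suc (Suc k))) \<le> N T ^ Suc (Suc k)" .
qed (use assms in simp_all)

lemma banach_op_subalgebra_span_powers:
  "T \<in> A \<Longrightarrow> span (range (\<lambda>k. blinfun_power T (Suc k))) \<subseteq> A"
  using banach_op_subalgebra_power(1)
  by (intro span_minimal[OF _ banach_op_subalgebra_subspace]) blast

lemma banach_op_subalgebra_neumann_series:
  assumes "E \<in> A" and "N E < 1"
  obtains L where "L \<in> A" and "is_blinfun_inverse (id_blinfun + L) (id_blinfun - E)"
proof -
  have "norm (N E) < 1"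
    using assms banach_op_subalgebra_norm_nonneg by simp
  then have "summable (\<lambda>k. N E * N E ^ k)"
    by (intro summable_mult summable_geometric)
  have summable: "summable (\<lambda>k. N (blinfun_power E (Suc k)))"
  proof (rule summable_comparison_test')
    show "summable (\<lambda>k. N E ^ Suc k)"
      using \<open>summable (\<lambda>k. N E * N E ^ k)\<close> by simp
    show "norm (N (blinfun_power E (Suc k))) \<le> N E ^ Suc k" if "0 \<le> k" for k
      using banach_op_subalgebra_power[OF assms(1), of k]
        banach_op_subalgebra_norm_nonneg[OF banach_op_subalgebra_power(1)[OF assms(1)]]
      by (simp del: blinfun_power.simps)
  qed
  obtain L where "L \<in> A" and L: "(\<lambda>n. \<Sum>k<n. blinfun_power E (Suc k)) \<longlonglongrightarrow> L"
    using banach_op_subalgebra_summable[of "\<lambda>k. blinfun_power E (Suc k)",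
        OF banach_op_subalgebra_power(1)[OF assms(1)] summable] .
  have "(\<lambda>n. blinfun_power E (Suc n)) \<longlonglongrightarrow> 0"
  proof (rule banach_op_subalgebra_tendsto)
    show "blinfun_power E (Suc n) \<in> A" for n
      by (rule banach_op_subalgebra_power(1)[OF assms(1)])
    show "0 \<in> A"
      by (rule subspace_0[OF banach_op_subalgebra_subspace])
    show "(\<lambda>n. N (blinfun_power E (Suc n) - 0)) \<longlonglongrightarrow> 0"
      using summable_LIMSEQ_zero[OF summable] by (simp del: blinfun_power.simps)
  qed
  then have lim_id: "(\<lambda>n. id_blinfun - blinfun_power E (Suc n)) \<longlonglongrightarrow> id_blinfun"
    using tendsto_diff[OF tendsto_const] by fastforce
  have partial_sum: "(\<Sum>k<Suc n. blinfun_power E k) = id_blinfun + (\<Sum>k<n. blinfun_power E (Suc k))" for n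
    by (simp only: sum.lessThan_Suc_shift blinfun_power.simps(1))
  have lim_sum: "(\<lambda>n. \<Sum>k<Suc n. blinfun_power E k) \<longlonglongrightarrow> id_blinfun + L"
    unfolding partial_sum by (rule tendsto_add[OF tendsto_const L])
  have "(\<lambda>n. (id_blinfun - E) o\<^sub>L (\<Sum>k<Suc n. blinfun_power E k))
      \<longlonglongrightarrow> ((id_blinfun - E) o\<^sub>L (id_blinfun + L))"
    by (rule bounded_bilinear.tendsto[OF bounded_bilinear_blinfun_compose tendsto_const lim_sum])
  then have "(id_blinfun - E) o\<^sub>L (id_blinfun + L) = id_blinfun"
    using lim_id unfolding blinfun_geometric_sum_left by (rule LIMSEQ_unique)
  moreover have "(\<lambda>n. (\<Sum>k<Suc n. blinfun_power E k) o\<^sub>L (id_blinfun - E))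
      \<longlonglongrightarrow> ((id_blinfun + L) o\<^sub>L (id_blinfun - E))"
    by (rule bounded_bilinear.tendsto[OF bounded_bilinear_blinfun_compose lim_sum tendsto_const])
  then have "(id_blinfun + L) o\<^sub>L (id_blinfun - E) = id_blinfun"
    using lim_id unfolding blinfun_geometric_sum_right by (rule LIMSEQ_unique)
  ultimately show thesis
    using that \<open>L \<in> A\<close> unfolding is_blinfun_inverse_def by blast
qed

lemma banach_op_subalgebra_inverse_id_minus:
  assumes "inj (blinfun_apply (id_blinfun - T))" and "T \<in> A"
    and "F \<in> A" and "finite_rank F" and "N (T - F) < 1"
  obtains S where "is_blinfun_inverse S (id_blinfun - T)" and "S - id_blinfun \<in> A"
proof -
  have "T - F \<in> A"
    using subspace_diff[OF banach_op_subalgebra_subspace assms(2,3)] .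
  then obtain L where "L \<in> A" and L: "is_blinfun_inverse (id_blinfun + L) (id_blinfun - (T - F))"
    using assms(5) by (rule banach_op_subalgebra_neumann_series)
  obtain R where R: "R \<in> span (range (\<lambda>k. blinfun_power ((id_blinfun + L) o\<^sub>L F) (Suc k)))"
    and S: "is_blinfun_inverse ((id_blinfun + R) o\<^sub>L (id_blinfun + L)) (id_blinfun - T)"
    by (rule inverse_of_finite_rank_perturbation[OF assms(1,4) L])
  have "(id_blinfun + L) o\<^sub>L F = F + (L o\<^sub>L F)"
    by (simp add: blinfun_compose_add_left)
  then have "(id_blinfun + L) o\<^sub>L F \<in> A"
    using \<open>L \<in> A\<close> assms(3)
    by (simp add: subspace_add[OF banach_op_subalgebra_subspace] banach_op_subalgebra_compose)
  then have "R \<in> A"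
    using banach_op_subalgebra_span_powers R by blast
  have "((id_blinfun + R) o\<^sub>L (id_blinfun + L)) - id_blinfun = L + (R + (R o\<^sub>L L))"
    by (simp add: blinfun_compose_add_left blinfun_compose_add_right)
  also have "\<dots> \<in> A"
    using \<open>L \<in> A\<close> \<open>R \<in> A\<close>
    by (simp add: subspace_add[OF banach_op_subalgebra_subspace] banach_op_subalgebra_compose)
  finally show thesis
    by (rule that[OF S])
qed

end

lemma banach_op_subalgebra_UNIV: "banach_op_subalgebra (UNIV :: ('a::banach \<Rightarrow>\<^sub>L 'a) set) norm"
  unfolding banach_op_subalgebra_def
proof (intro conjI allI impI ballI)
  fix f :: "nat \<Rightarrow> 'a \<Rightarrow>\<^sub>L 'a"
  assume "(\<forall>n. f n \<in> UNIV) \<and> (\<forall>e>0. \<exists>M. \<forall>m\<ge>M. \<forall>n\<ge>M. norm (f m - f n) < e)"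
  then have "Cauchy f"
    unfolding Cauchy_def dist_norm by blast
  then obtain L where "f \<longlonglongrightarrow> L"
    using Cauchy_convergent_iff convergent_def by blast
  then have "(\<lambda>n. norm (f n - L)) \<longlonglongrightarrow> 0"
    by (intro tendsto_norm_zero LIM_zero)
  then show "\<exists>L\<in>UNIV. (\<lambda>n. norm (f n - L)) \<longlonglongrightarrow> 0"
    by blast
next
  show "\<exists>C. \<forall>S\<in>UNIV. norm S \<le> C * norm (S :: 'a \<Rightarrow>\<^sub>L 'a)"
    by (rule exI[of _ 1]) simp
qed (auto simp: norm_blinfun_compose norm_triangle_ineq)

theorem mainTheorem9:
  fixes T :: "'a::banach \<Rightarrow>\<^sub>L 'a"
  assumes "approx_finite_rank T"
  shows "(\<exists>f. f \<noteq> 0 \<and> blinfun_apply T f = f) \<or>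
         (\<exists>S. S o\<^sub>L (id_blinfun - T) = id_blinfun \<and> (id_blinfun - T) o\<^sub>L S = id_blinfun \<and>
              (\<forall>A N. banach_op_subalgebra A N \<and> finite_rank T \<and> T \<in> A
                  \<longrightarrow> S - id_blinfun \<in> A) \<and>
              (\<forall>A N. banach_op_subalgebra A N \<and>
                  (\<exists>C. \<forall>T1\<in>A. \<forall>T2\<in>A. \<forall>R.
                       T1 o\<^sub>L R o\<^sub>L T2 \<in> A \<and> N (T1 o\<^sub>L R o\<^sub>L T2) \<le> C * N T1 * norm R * N T2) \<and>
                  T \<in> A \<and> (\<forall>e>0. \<exists>F\<in>A. finite_rank F \<and> N (T - F) < e)
                  \<longrightarrow> S - id_blinfun \<in> A))"
proof (cases "\<exists>f. f \<noteq> 0 \<and> blinfun_apply T f = f")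
  case False
  then have inj: "inj (blinfun_apply (id_blinfun - T))"
    unfolding inj_id_minus_blinfun_iff by blast
  have "\<exists>F\<in>{S. finite_rank S}. dist F T < 1"
    using assms unfolding approx_finite_rank_def closure_approachable by simp
  then obtain F where "finite_rank F" and "norm (T - F) < 1"
    by (auto simp: dist_norm norm_minus_commute)
  then obtain S where S: "is_blinfun_inverse S (id_blinfun - T)"
    using banach_op_subalgebra_inverse_id_minus[OF banach_op_subalgebra_UNIV inj] by blast
  have S_minus_id: "S - id_blinfun \<in> A"
    if "banach_op_subalgebra A N" and "T \<in> A" and "F \<in> A" and "finite_rank F" and "N (T - F) < 1"
    for A N F
    using banach_op_subalgebra_inverse_id_minus[OF that(1) inj that(2-)] is_blinfun_inverse_unique[OF S]
    by blast
  have finite_rank_case: "S - id_blinfun \<in> A"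
    if "banach_op_subalgebra A N" and "finite_rank T" and "T \<in> A" for A N
    using S_minus_id[OF that(1,3,3,2)] banach_op_subalgebra_norm_zero[OF that(1)] by simp
  have approximable_case: "S - id_blinfun \<in> A"
    if subalgebra: "banach_op_subalgebra A N" and "T \<in> A"
      and approximable: "\<forall>e>0. \<exists>F\<in>A. finite_rank F \<and> N (T - F) < e" for A N
  proof -
    obtain F' where "F' \<in> A" and "finite_rank F'" and "N (T - F') < 1"
      using approximable zero_less_one by blast
    then show ?thesis
      by (rule S_minus_id[OF subalgebra \<open>T \<in> A\<close>])
  qed
  show ?thesis
  proof (intro disjI2 exI[of _ S] conjI allI impI)
    show "S o\<^sub>L (id_blinfun - T) = id_blinfun" and "(id_blinfun - T) o\<^sub>L S = id_blinfun"
      using S unfolding is_blinfun_inverse_def by simp_all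
  qed (use finite_rank_case approximable_case in blast)+
qed simp

end
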